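(* For every integer $t$, \begin{align*} \sum_{n=1}^\infty\binom{2n}{n}\frac{O_nL_{n+t}}{12^n}&=\frac{\sqrt{15}\sqrt{\alpha+2}}{10}\left((\alpha^t+\beta^{t+1})\ln\alpha-(\alpha^t-\beta^{t+1})\ln\Bigl(\frac{\sqrt5}{3}\Bigr)\right),\\ \sum_{n=1}^\infty\binom{2n}{n}\frac{O_nF_{n+t}}{12^n}&=\frac{\sqrt3\sqrt{\alpha+2}}{10}\left((\alpha^t-\beta^{t+1})\ln\alpha-(\alpha^t+\beta^{t+1})\ln\Bigl(\frac{\sqrt5}{3}\Bigr)\right), \end{align*} and, for every gibonacci sequence $G_j=G_j(a,b)$, \begin{align*} \sum_{n=1}^\infty\binom{2n}{n}\frac{O_nG_{n+t}}{12^n}&=\frac{\sqrt3\sqrt{\alpha+2}}{10}\Bigl(\bigl(a(\alpha^{t-1}-\beta^t)+b(\alpha^t-\beta^{t+1})\bigr)\ln\alpha\\ &\qquad-\bigl(a(\alpha^{t-1}+\beta^t)+b(\alpha^t+\beta^{t+1})\bigr)\ln\Bigl(\frac{\sqrt5}{3}\Bigr)\Bigr). \end{align*}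
   Context: $O_n=\sum_{j=1}^n\frac1{2j-1}$. $F_n$ and $L_n$ are the Fibonacci and Lucas numbers ($F_0=0,F_1=1$, $L_0=2,L_1=1$, $u_n=u_{n-1}+u_{n-2}$), extended to all integers by the recurrence. $\alpha=(1+\sqrt5)/2$, $\beta=-1/\alpha$. For numbers $a,b$ not both zero, the gibonacci sequence $G_j=G_j(a,b)$ is defined by $G_0=a$, $G_1=b$, $G_j=G_{j-1}+G_{j-2}$, extended to negative indices by $G_{-j}=G_{-(j-2)}-G_{-(j-1)}$; equivalently $G_j=\frac{(b-a\beta)\alpha^j+(a\alpha-b)\beta^j}{\alpha-\beta}$. *)

theory Defs
  imports Complex_Main
begin

definition phi :: real where "phi = (1 + sqrt 5) / 2"
definition psi :: real where "psi = - 1 / phi"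

definition Odd_harm :: "nat \<Rightarrow> real" where
  "Odd_harm n = (\<Sum>j=1..n. 1 / (2 * real j - 1))"

fun gib_nat :: "real \<Rightarrow> real \<Rightarrow> nat \<Rightarrow> real" where
  "gib_nat a b 0 = a"
| "gib_nat a b (Suc 0) = b"
| "gib_nat a b (Suc (Suc n)) = gib_nat a b n + gib_nat a b (Suc n)"

text \<open>gib_neg a b j = G_{-j}(a,b), via G_{-j} = G_{-(j-2)} - G_{-(j-1)}\<close>
fun gib_neg :: "real \<Rightarrow> real \<Rightarrow> nat \<Rightarrow> real" where
  "gib_neg a b 0 = a"
| "gib_neg a b (Suc 0) = b - a"
| "gib_neg a b (Suc (Suc n)) = gib_neg a b n - gib_neg a b (Suc n)"

definition gib :: "real \<Rightarrow> real \<Rightarrow> int \<Rightarrow> real" where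
  "gib a b j = (if 0 \<le> j then gib_nat a b (nat j) else gib_neg a b (nat (- j)))"

definition fibz :: "int \<Rightarrow> real" where "fibz = gib 0 1"
definition lucz :: "int \<Rightarrow> real" where "lucz = gib 2 1"

end

theory Submission
  imports Defs "HOL-Computational_Algebra.Formal_Power_Series" "HOL-Analysis.Generalised_Binomial_Theorem"
begin

(*
  The generating function of C(2n,n) O_n is -ln(1 - 4x) / (2 sqrt(1 - 4x)): twice it is the
  Cauchy product of sum C(2n,n) x^n = (1 - 4x)^(-1/2) and sum 4^n x^n / n = -ln(1 - 4x).
  On the level of formal power series both 2 C(2n,n) O_n and this convolution solve the
  linear ODE (1 - 4x) y' = 2y + 4 sum C(2n,n) x^n with y(0) = 0, hence coincide.
  By Binet's formula the series for G_(n+t) is a combination of the generating function at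
  x = alpha/12 and x = beta/12, where 1 - 4x equals sqrt 5 / (3 alpha) and sqrt 5 alpha / 3.
*)

unbundle no vec_syntax
unbundle fps_syntax

lemma central_binomial_eq_fact: "real ((2 * n) choose n) = fact (2 * n) / (fact n)^2"
  by (subst binomial_fact) (simp_all add: power2_eq_square mult_2)

lemma central_binomial_Suc:
  "real (Suc n) * real ((2 * Suc n) choose Suc n) = (4 * real n + 2) * real ((2 * n) choose n)"
proof -
  have "fact (2 * Suc n) = (2 * real n + 2) * (2 * real n + 1) * (fact (2 * n) :: real)"
    by (simp add: algebra_simps)
  moreover have "(fact (Suc n) :: real) = (real n + 1) * fact n" by simp
  ultimately show ?thesis unfolding central_binomial_eq_fact
    by (simp add: divide_simps) (simp add: algebra_simps power2_eq_square)
qed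

lemma Odd_harm_0 [simp]: "Odd_harm 0 = 0"
  by (simp add: Odd_harm_def)

lemma Odd_harm_Suc: "Odd_harm (Suc n) = Odd_harm n + 1 / (2 * real n + 1)"
  by (simp add: Odd_harm_def)

lemma fps_nth_one_minus_const_X_mult:
  fixes F :: "'a::comm_ring_1 fps"
  shows "((1 - fps_const c * fps_X) * F) $ n = F $ n - (if n = 0 then 0 else c * F $ (n - 1))"
  by (simp add: left_diff_distrib mult.assoc)

lemma fps_linear_ODE_eq_0:
  fixes D :: "'a::field_char_0 fps"
  assumes ode: "(1 - fps_const c * fps_X) * fps_deriv D = fps_const k * D" and "D $ 0 = 0"
  shows "D = 0"
proof (rule fps_ext)
  fix n show "D $ n = 0 $ n"
  proof (induction n)
    case 0 then show ?case using \<open>D $ 0 = 0\<close> by simp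
  next
    case (Suc n)
    have "((1 - fps_const c * fps_X) * fps_deriv D) $ n = (fps_const k * D) $ n"
      by (simp only: ode)
    then have "of_nat (Suc n) * D $ Suc n = 0"
      using Suc.IH by (simp only: fps_nth_one_minus_const_X_mult) (cases n, simp_all)
    then show ?case by (simp only: mult_eq_0_iff of_nat_eq_0_iff) simp
  qed
qed

lemma central_binomial_fps_ODE:
  "(1 - fps_const 4 * fps_X) * fps_deriv (Abs_fps (\<lambda>n. real ((2 * n) choose n)))
     = fps_const 2 * Abs_fps (\<lambda>n. real ((2 * n) choose n))"
proof (rule fps_ext)
  fix n show "((1 - fps_const 4 * fps_X) * fps_deriv (Abs_fps (\<lambda>n. real ((2 * n) choose n)))) $ n
     = (fps_const 2 * Abs_fps (\<lambda>n. real ((2 * n) choose n))) $ n"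
    using central_binomial_Suc[of n] central_binomial_Suc[of "n - 1"]
    by (simp only: fps_nth_one_minus_const_X_mult) (cases n, simp_all add: algebra_simps)
qed

lemma log_fps_ODE:
  "(1 - fps_const 4 * fps_X) * fps_deriv (Abs_fps (\<lambda>n. 4 ^ n / real n)) = fps_const 4"
proof (rule fps_ext)
  fix n show "((1 - fps_const 4 * fps_X) * fps_deriv (Abs_fps (\<lambda>n. 4 ^ n / real n))) $ n
     = (fps_const 4 :: real fps) $ n"
    by (simp only: fps_nth_one_minus_const_X_mult) (cases n, simp_all)
qed

lemma Odd_harm_fps_ODE:
  "(1 - fps_const 4 * fps_X) * fps_deriv (Abs_fps (\<lambda>n. 2 * real ((2 * n) choose n) * Odd_harm n))
     = fps_const 2 * Abs_fps (\<lambda>n. 2 * real ((2 * n) choose n) * Odd_harm n)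
       + fps_const 4 * Abs_fps (\<lambda>n. real ((2 * n) choose n))"
proof (rule fps_ext)
  fix n
  have rec: "real (Suc k) * (2 * real ((2 * Suc k) choose Suc k) * Odd_harm (Suc k))
      = (4 * real k + 2) * (2 * real ((2 * k) choose k) * Odd_harm k) + 4 * real ((2 * k) choose k)" for k
  proof -
    have "real (Suc k) * (2 * real ((2 * Suc k) choose Suc k) * Odd_harm (Suc k))
        = 2 * (real (Suc k) * real ((2 * Suc k) choose Suc k)) * Odd_harm (Suc k)"
      by (simp only: ac_simps)
    also have "\<dots> = 2 * ((4 * real k + 2) * real ((2 * k) choose k)) * (Odd_harm k + 1 / (2 * real k + 1))"
      by (simp only: central_binomial_Suc Odd_harm_Suc)
    also have "\<dots> = (4 * real k + 2) * (2 * real ((2 * k) choose k) * Odd_harm k) + 4 * real ((2 * k) choose k)"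
      by (simp add: field_simps)
    finally show ?thesis .
  qed
  show "((1 - fps_const 4 * fps_X) * fps_deriv (Abs_fps (\<lambda>n. 2 * real ((2 * n) choose n) * Odd_harm n))) $ n
     = (fps_const 2 * Abs_fps (\<lambda>n. 2 * real ((2 * n) choose n) * Odd_harm n)
       + fps_const 4 * Abs_fps (\<lambda>n. real ((2 * n) choose n))) $ n"
    using rec[of n] rec[of "n - 1"]
    by (simp only: fps_nth_one_minus_const_X_mult) (cases n, simp_all add: algebra_simps)
qed

(* The summand i = n is 4^0 / real 0 = 0. *)
lemma central_binomial_log_convolution:
  "(\<Sum>i\<le>n. real ((2 * i) choose i) * (4 ^ (n - i) / real (n - i)))
     = 2 * real ((2 * n) choose n) * Odd_harm n"
proof -
  define C where "C = Abs_fps (\<lambda>n. real ((2 * n) choose n))"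
  define L where "L = Abs_fps (\<lambda>n. 4 ^ n / real n :: real)"
  define H where "H = Abs_fps (\<lambda>n. 2 * real ((2 * n) choose n) * Odd_harm n)"
  let ?E = "1 - fps_const 4 * fps_X :: real fps"
  have "?E * fps_deriv (C * L - H)
      = (?E * fps_deriv C) * L + C * (?E * fps_deriv L) - ?E * fps_deriv H"
    by (simp add: algebra_simps)
  also have "\<dots> = fps_const 2 * (C * L - H)"
    unfolding C_def L_def H_def central_binomial_fps_ODE log_fps_ODE Odd_harm_fps_ODE
    by (simp add: algebra_simps)
  finally have "C * L - H = 0"
    by (rule fps_linear_ODE_eq_0) (simp add: C_def L_def H_def)
  then have "(C * L) $ n = H $ n" by simp
  then show ?thesis by (simp add: C_def L_def H_def fps_mult_nth atLeast0AtMost)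
qed

lemma gbinomial_minus_one_half:
  "((- 1 / 2 :: real) gchoose n) * (- 4) ^ n = real ((2 * n) choose n)"
proof (induction n)
  case 0 then show ?case by simp
next
  case (Suc n)
  have "real (Suc n) * ((- 1 / 2 :: real) gchoose Suc n) = (- 1 / 2 - real n) * ((- 1 / 2) gchoose n)"
    using gbinomial_absorption[of n "- 1 / 2 :: real"] gbinomial_absorb_comp[of "- 1 / 2 :: real" n]
    by simp
  then have "real (Suc n) * (((- 1 / 2 :: real) gchoose Suc n) * (- 4) ^ Suc n)
      = (- 1 / 2 - real n) * ((- 1 / 2) gchoose n) * (- 4) * (- 4) ^ n"
    by (simp only: power_Suc mult.assoc [symmetric])
  also have "\<dots> = (4 * real n + 2) * (((- 1 / 2) gchoose n) * (- 4) ^ n)"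
    by (simp add: algebra_simps)
  also have "\<dots> = real (Suc n) * real ((2 * Suc n) choose Suc n)"
    by (simp only: Suc.IH central_binomial_Suc)
  finally show ?case by (metis mult_left_cancel of_nat_eq_0_iff nat.distinct(1))
qed

lemma central_binomial_sums:
  fixes x :: real
  assumes "\<bar>x\<bar> < 1 / 4"
  shows "(\<lambda>n. real ((2 * n) choose n) * x ^ n) sums (1 / sqrt (1 - 4 * x))"
proof -
  have "(\<lambda>n. ((- 1 / 2) gchoose n) * (- 4 * x) ^ n) sums (1 + - 4 * x) powr (- 1 / 2)"
    by (rule gen_binomial_real) (use assms in simp)
  moreover have "((- 1 / 2) gchoose n) * (- 4 * x) ^ n = real ((2 * n) choose n) * x ^ n" for n
    by (simp only: power_mult_distrib mult.assoc [symmetric] gbinomial_minus_one_half)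
  moreover have "(1 - 4 * x) powr (- 1 / 2) = 1 / sqrt (1 - 4 * x)"
    using assms by (simp add: powr_minus_divide powr_half_sqrt)
  ultimately show ?thesis by simp
qed

lemma sums_minus_ln_one_minus:
  fixes x :: real
  assumes "\<bar>x\<bar> < 1"
  shows "(\<lambda>n. x ^ n / real n) sums (- ln (1 - x))"
  using sums_minus [OF ln_series' [of "- x"]] assms by simp

definition odd_harm_gf :: "real \<Rightarrow> real" where
  "odd_harm_gf x = - ln (1 - 4 * x) / (2 * sqrt (1 - 4 * x))"

lemma Odd_harm_central_binomial_sums:
  fixes x :: real
  assumes "\<bar>x\<bar> < 1 / 4"
  shows "(\<lambda>n. real ((2 * n) choose n) * Odd_harm n * x ^ n) sums odd_harm_gf x"
proof -
  have log_sums: "(\<lambda>n. 4 ^ n / real n * y ^ n) sums (- ln (1 - 4 * y))" if "\<bar>y\<bar> < 1 / 4" for y :: real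
    using sums_minus_ln_one_minus [of "4 * y"] that by (simp add: power_mult_distrib)
  have abs_C: "summable (\<lambda>n. norm (real ((2 * n) choose n) * x ^ n))"
    using sums_summable [OF central_binomial_sums [of "\<bar>x\<bar>"]] assms
    by (simp add: abs_mult power_abs)
  have abs_L: "summable (\<lambda>n. norm (4 ^ n / real n * x ^ n))"
    using sums_summable [OF log_sums [of "\<bar>x\<bar>"]] assms
    by (simp add: abs_mult power_abs)
  have "(\<lambda>n. \<Sum>i\<le>n. real ((2 * i) choose i) * x ^ i * (4 ^ (n - i) / real (n - i) * x ^ (n - i)))
      sums (1 / sqrt (1 - 4 * x) * - ln (1 - 4 * x))"
    using Cauchy_product_sums [OF abs_C abs_L]
    by (simp add: sums_unique [OF central_binomial_sums [OF assms]] sums_unique [OF log_sums [OF assms]])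
  moreover have "(\<Sum>i\<le>n. real ((2 * i) choose i) * x ^ i * (4 ^ (n - i) / real (n - i) * x ^ (n - i)))
      = 2 * (real ((2 * n) choose n) * Odd_harm n * x ^ n)" for n
  proof -
    have "(\<Sum>i\<le>n. real ((2 * i) choose i) * x ^ i * (4 ^ (n - i) / real (n - i) * x ^ (n - i)))
        = (\<Sum>i\<le>n. real ((2 * i) choose i) * (4 ^ (n - i) / real (n - i))) * x ^ n"
      unfolding sum_distrib_right by (rule sum.cong) (auto simp: power_add [symmetric])
    also have "\<dots> = 2 * real ((2 * n) choose n) * Odd_harm n * x ^ n"
      by (simp only: central_binomial_log_convolution)
    finally show ?thesis by (simp only: mult.assoc)
  qed
  ultimately have "(\<lambda>n. 2 * (real ((2 * n) choose n) * Odd_harm n * x ^ n))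
      sums (1 / sqrt (1 - 4 * x) * - ln (1 - 4 * x))"
    by simp
  from sums_divide [OF this, of 2] show ?thesis by (simp add: odd_harm_gf_def mult.commute)
qed

lemma phi_pos: "phi > 0"
  by (simp add: phi_def add_pos_nonneg)

lemma phi_times_psi: "phi * psi = - 1"
  using phi_pos by (simp add: psi_def)

lemma psi_eq: "psi = (1 - sqrt 5) / 2"
proof -
  have "phi * ((1 - sqrt 5) / 2) = - 1"
    by (simp add: phi_def algebra_simps)
  then show ?thesis
    using phi_times_psi phi_pos by (metis mult_left_cancel less_irrefl)
qed

lemma psi_nonzero: "psi \<noteq> 0"
  using phi_times_psi by auto

lemma phi_minus_psi: "phi - psi = sqrt 5"
  by (simp add: phi_def psi_eq field_simps)

lemma phi_squared: "phi\<^sup>2 = phi + 1"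
  by (simp add: phi_def power2_eq_square field_simps)

lemma psi_squared: "psi\<^sup>2 = psi + 1"
  by (simp add: psi_eq power2_eq_square field_simps)

lemma phi_plus_2: "phi + 2 = sqrt 5 * phi"
  by (simp add: phi_def algebra_simps)

lemma psi_plus_2: "psi + 2 = - sqrt 5 * psi"
  by (simp add: psi_eq field_simps)

lemma int_fibonacci_recurrence_unique:
  fixes g h :: "int \<Rightarrow> 'a::ab_group_add"
  assumes "\<And>j. g (j + 2) = g (j + 1) + g j" and "\<And>j. h (j + 2) = h (j + 1) + h j"
    and "g 0 = h 0" and "g 1 = h 1"
  shows "g j = h j"
proof -
  have "g j = h j \<and> g (j + 1) = h (j + 1)"
  proof (induction j rule: int_induct [where k = 0])
    case base then show ?case using assms(3,4) by simp
  next
    case (step1 i) then show ?case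
      using assms(1,2) [of i] by (simp add: add.assoc)
  next
    case (step2 i)
    have "g (i - 1) = g (i + 1) - g i" "h (i - 1) = h (i + 1) - h i"
      using assms(1,2) [of "i - 1"] by (simp_all add: algebra_simps)
    then show ?case using step2.IH by simp
  qed
  then show ?thesis ..
qed

lemma gib_add_2: "gib a b (j + 2) = gib a b (j + 1) + gib a b j"
proof -
  consider "j \<ge> 0" | "j = - 1" | "j \<le> - 2"
    by linarith
  then show ?thesis
  proof cases
    case 1
    then have "nat (j + 2) = Suc (Suc (nat j))" "nat (j + 1) = Suc (nat j)"
      by simp_all
    with 1 show ?thesis by (simp add: gib_def)
  next
    case 2
    then show ?thesis by (simp add: gib_def)
  next
    case 3
    then have "nat (- j) = Suc (Suc (nat (- j - 2)))" "nat (- (j + 1)) = Suc (nat (- j - 2))"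
      "nat (- (j + 2)) = nat (- j - 2)"
      by simp_all
    with 3 show ?thesis by (simp add: gib_def)
  qed
qed

lemma power_int_add_2:
  fixes x :: "'a::field"
  assumes "x\<^sup>2 = x + 1"
  shows "x powi (j + 2) = x powi (j + 1) + x powi j"
proof -
  have "x \<noteq> 0" using assms by auto
  then have "x powi (j + 2) = x powi j * x\<^sup>2" "x powi (j + 1) = x powi j * x"
    by (simp_all add: power_int_add)
  then show ?thesis using assms by (simp add: algebra_simps)
qed

lemma gib_binet:
  "gib a b j = ((a * phi powi (j - 1) + b * phi powi j) - (a * psi powi (j - 1) + b * psi powi j)) / sqrt 5"
proof -
  define U where "U x j = a * x powi (j - 1) + b * x powi j" for x :: real and j
  have U_add_2: "U x (j + 2) = U x (j + 1) + U x j" if "x\<^sup>2 = x + 1" for x j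
    using power_int_add_2 [OF that, of "j - 1"] power_int_add_2 [OF that, of j]
    by (simp add: U_def algebra_simps)
  have "gib a b j = (U phi j - U psi j) / sqrt 5"
  proof (rule int_fibonacci_recurrence_unique)
    show "gib a b (j + 2) = gib a b (j + 1) + gib a b j" for j
      by (rule gib_add_2)
    show "(U phi (j + 2) - U psi (j + 2)) / sqrt 5
        = (U phi (j + 1) - U psi (j + 1)) / sqrt 5 + (U phi j - U psi j) / sqrt 5" for j
      by (simp add: U_add_2 phi_squared psi_squared diff_divide_distrib add_divide_distrib)
    have "1 / phi - 1 / psi = sqrt 5"
      using phi_times_psi phi_minus_psi phi_pos psi_nonzero by (simp add: field_simps)
    then show "gib a b 0 = (U phi 0 - U psi 0) / sqrt 5"
      by (simp add: U_def gib_def power_int_minus field_simps)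
    have "b * phi - b * psi = b * sqrt 5"
      by (simp add: phi_minus_psi flip: right_diff_distrib)
    then show "gib a b 1 = (U phi 1 - U psi 1) / sqrt 5"
      by (simp add: U_def gib_def)
  qed
  then show ?thesis by (simp add: U_def)
qed

lemma one_minus_phi_div_3: "1 - 4 * (phi / 12) = sqrt 5 / (3 * phi)"
proof -
  have "phi * (3 - phi) = sqrt 5"
    by (simp add: phi_def algebra_simps)
  then show ?thesis using phi_pos by (simp add: field_simps)
qed

lemma one_minus_psi_div_3: "1 - 4 * (psi / 12) = sqrt 5 * phi / 3"
proof -
  have "3 * phi + 1 = sqrt 5 * phi\<^sup>2"
    by (simp add: phi_def power2_eq_square algebra_simps)
  then show ?thesis using phi_pos by (simp add: psi_def power2_eq_square field_simps)
qed

lemma sqrt_3_phi_plus_2_squared: "(sqrt 3 * sqrt (phi + 2))\<^sup>2 = 3 * sqrt 5 * phi"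
  using phi_pos by (simp add: power_mult_distrib phi_plus_2)

lemma odd_harm_gf_phi_div_12:
  "odd_harm_gf (phi / 12) = sqrt 3 * sqrt (phi + 2) * (ln phi - ln (sqrt 5 / 3)) / (2 * sqrt 5)"
proof -
  define K where "K = sqrt 3 * sqrt (phi + 2)"
  have "K > 0" using phi_pos by (simp add: K_def)
  have sqrt_eq: "sqrt (sqrt 5 / (3 * phi)) = sqrt 5 / K"
    by (rule real_sqrt_unique)
      (use \<open>K > 0\<close> phi_pos sqrt_3_phi_plus_2_squared
        in \<open>simp_all add: K_def [symmetric] field_simps\<close>)
  have ln_eq: "ln (sqrt 5 / (3 * phi)) = ln (sqrt 5 / 3) - ln phi"
    using phi_pos ln_div [of "sqrt 5 / 3" phi] by (simp add: mult.commute)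
  show ?thesis
    unfolding odd_harm_gf_def one_minus_phi_div_3 sqrt_eq ln_eq K_def [symmetric]
    using \<open>K > 0\<close> by (simp add: field_simps)
qed

lemma odd_harm_gf_psi_div_12:
  "odd_harm_gf (psi / 12) = sqrt 3 * sqrt (phi + 2) * psi * (ln phi + ln (sqrt 5 / 3)) / (2 * sqrt 5)"
proof -
  define K where "K = sqrt 3 * sqrt (phi + 2)"
  have "K > 0" using phi_pos by (simp add: K_def)
  have sqrt_eq: "sqrt (sqrt 5 * phi / 3) = sqrt 5 * phi / K"
    by (rule real_sqrt_unique)
      (use \<open>K > 0\<close> phi_pos sqrt_3_phi_plus_2_squared
        in \<open>simp_all add: K_def [symmetric] field_simps power2_eq_square\<close>)
  have ln_eq: "ln (sqrt 5 * phi / 3) = ln (sqrt 5 / 3) + ln phi"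
    using phi_pos ln_mult [of "sqrt 5 / 3" phi] by simp
  show ?thesis
    unfolding odd_harm_gf_def one_minus_psi_div_3 sqrt_eq ln_eq K_def [symmetric]
    using \<open>K > 0\<close> phi_pos by (simp add: psi_def field_simps)
qed

lemma gib_central_binomial_Odd_harm_sums_odd_harm_gf:
  "(\<lambda>n. real ((2 * n) choose n) * Odd_harm n * gib a b (int n + t) / 12 ^ n)
     sums (((a * phi powi (t - 1) + b * phi powi t) * odd_harm_gf (phi / 12)
            - (a * psi powi (t - 1) + b * psi powi t) * odd_harm_gf (psi / 12)) / sqrt 5)"
proof -
  define U where "U = a * phi powi (t - 1) + b * phi powi t"
  define V where "V = a * psi powi (t - 1) + b * psi powi t"
  have "sqrt 5 < 3"
    by (rule real_less_lsqrt) simp_all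
  then have "\<bar>phi / 12\<bar> < 1 / 4" "\<bar>psi / 12\<bar> < 1 / 4"
    by (simp_all add: phi_def psi_eq)
  then have "(\<lambda>n. (U * (real ((2 * n) choose n) * Odd_harm n * (phi / 12) ^ n)
      - V * (real ((2 * n) choose n) * Odd_harm n * (psi / 12) ^ n)) / sqrt 5)
      sums ((U * odd_harm_gf (phi / 12) - V * odd_harm_gf (psi / 12)) / sqrt 5)"
    by (intro sums_divide sums_diff sums_mult Odd_harm_central_binomial_sums)
  moreover have "(\<lambda>n. (U * (real ((2 * n) choose n) * Odd_harm n * (phi / 12) ^ n)
      - V * (real ((2 * n) choose n) * Odd_harm n * (psi / 12) ^ n)) / sqrt 5)
      = (\<lambda>n. real ((2 * n) choose n) * Odd_harm n * gib a b (int n + t) / 12 ^ n)"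
  proof
    fix n
    have "gib a b (int n + t) = (phi ^ n * U - psi ^ n * V) / sqrt 5"
      unfolding gib_binet U_def V_def using phi_pos psi_nonzero
      by (simp add: power_int_add power_int_diff algebra_simps)
    then show "(U * (real ((2 * n) choose n) * Odd_harm n * (phi / 12) ^ n)
      - V * (real ((2 * n) choose n) * Odd_harm n * (psi / 12) ^ n)) / sqrt 5
      = real ((2 * n) choose n) * Odd_harm n * gib a b (int n + t) / 12 ^ n"
      by (simp only:) (simp add: field_simps)
  qed
  ultimately show ?thesis
    unfolding U_def V_def by (simp only:)
qed

lemma gib_central_binomial_Odd_harm_sums:
  "(\<lambda>m. let n = Suc m in real ((2*n) choose n) * Odd_harm n * gib a b (int n + t) / 12 ^ n)
      sums (sqrt 3 * sqrt (phi + 2) / 10 *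
        ((a * (phi powi (t-1) - psi powi t) + b * (phi powi t - psi powi (t+1))) * ln phi
         - (a * (phi powi (t-1) + psi powi t) + b * (phi powi t + psi powi (t+1))) * ln (sqrt 5 / 3)))"
proof -
  define U where "U = a * phi powi (t - 1) + b * phi powi t"
  define V where "V = a * psi powi (t - 1) + b * psi powi t"
  have psi_V: "psi * V = a * psi powi t + b * psi powi (t + 1)"
    using psi_nonzero by (simp add: V_def power_int_add power_int_diff algebra_simps)
  have "(\<lambda>n. real ((2 * n) choose n) * Odd_harm n * gib a b (int n + t) / 12 ^ n)
      sums ((U * odd_harm_gf (phi / 12) - V * odd_harm_gf (psi / 12)) / sqrt 5)"
    unfolding U_def V_def by (rule gib_central_binomial_Odd_harm_sums_odd_harm_gf)
  also have "\<dots> = sqrt 3 * sqrt (phi + 2) / 10 *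
        (U * (ln phi - ln (sqrt 5 / 3)) - (psi * V) * (ln phi + ln (sqrt 5 / 3)))"
    unfolding odd_harm_gf_phi_div_12 odd_harm_gf_psi_div_12 by (simp add: field_simps)
  also have "\<dots> = sqrt 3 * sqrt (phi + 2) / 10 *
        ((a * (phi powi (t-1) - psi powi t) + b * (phi powi t - psi powi (t+1))) * ln phi
         - (a * (phi powi (t-1) + psi powi t) + b * (phi powi t + psi powi (t+1))) * ln (sqrt 5 / 3))"
    unfolding psi_V by (simp add: U_def algebra_simps)
  finally show ?thesis
    unfolding Let_def by (subst sums_Suc_iff) simp
qed

lemma lucz_central_binomial_Odd_harm_sums:
  "(\<lambda>m. let n = Suc m in real ((2*n) choose n) * Odd_harm n * lucz (int n + t) / 12 ^ n)
      sums (sqrt 15 * sqrt (phi + 2) / 10 *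
        ((phi powi t + psi powi (t+1)) * ln phi - (phi powi t - psi powi (t+1)) * ln (sqrt 5 / 3)))"
  using gib_central_binomial_Odd_harm_sums [of 2 1 t] unfolding lucz_def
proof (rule back_subst [of "(sums) _"])
  have "2 * phi powi (t - 1) + phi powi t = phi powi (t - 1) * (phi + 2)"
    using phi_pos by (simp add: power_int_diff field_simps)
  also have "\<dots> = sqrt 5 * phi powi t"
    using phi_pos by (simp add: phi_plus_2 power_int_diff)
  finally have lucas_phi: "2 * phi powi (t - 1) + phi powi t = sqrt 5 * phi powi t" .
  have "2 * psi powi t + psi powi (t + 1) = psi powi t * (psi + 2)"
    using psi_nonzero by (simp add: power_int_add algebra_simps)
  also have "\<dots> = - sqrt 5 * psi powi (t + 1)"
    using psi_nonzero by (simp add: psi_plus_2 power_int_add)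
  finally have lucas_psi: "2 * psi powi t + psi powi (t + 1) = - sqrt 5 * psi powi (t + 1)" .
  have lucas_diff: "2 * (phi powi (t - 1) - psi powi t) + 1 * (phi powi t - psi powi (t + 1))
      = sqrt 5 * (phi powi t + psi powi (t + 1))"
    and lucas_sum: "2 * (phi powi (t - 1) + psi powi t) + 1 * (phi powi t + psi powi (t + 1))
      = sqrt 5 * (phi powi t - psi powi (t + 1))"
    using lucas_phi lucas_psi by (simp_all add: algebra_simps)
  have sqrt_15: "sqrt 15 = sqrt 3 * sqrt 5"
    by (simp flip: real_sqrt_mult)
  show "sqrt 3 * sqrt (phi + 2) / 10 *
      ((2 * (phi powi (t - 1) - psi powi t) + 1 * (phi powi t - psi powi (t + 1))) * ln phi
       - (2 * (phi powi (t - 1) + psi powi t) + 1 * (phi powi t + psi powi (t + 1))) * ln (sqrt 5 / 3))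
    = sqrt 15 * sqrt (phi + 2) / 10 *
      ((phi powi t + psi powi (t + 1)) * ln phi - (phi powi t - psi powi (t + 1)) * ln (sqrt 5 / 3))"
    unfolding lucas_diff lucas_sum sqrt_15 by (simp add: algebra_simps)
qed

lemma fibz_central_binomial_Odd_harm_sums:
  "(\<lambda>m. let n = Suc m in real ((2*n) choose n) * Odd_harm n * fibz (int n + t) / 12 ^ n)
      sums (sqrt 3 * sqrt (phi + 2) / 10 *
        ((phi powi t - psi powi (t+1)) * ln phi - (phi powi t + psi powi (t+1)) * ln (sqrt 5 / 3)))"
  using gib_central_binomial_Odd_harm_sums [of 0 1 t] by (simp add: fibz_def)

theorem theorem16:
  fixes t :: int
  shows
   "(\<lambda>m. let n = Suc m in real ((2*n) choose n) * Odd_harm n * lucz (int n + t) / 12 ^ n)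
      sums (sqrt 15 * sqrt (phi + 2) / 10 *
        ((phi powi t + psi powi (t+1)) * ln phi - (phi powi t - psi powi (t+1)) * ln (sqrt 5 / 3)))
    \<and> (\<lambda>m. let n = Suc m in real ((2*n) choose n) * Odd_harm n * fibz (int n + t) / 12 ^ n)
      sums (sqrt 3 * sqrt (phi + 2) / 10 *
        ((phi powi t - psi powi (t+1)) * ln phi - (phi powi t + psi powi (t+1)) * ln (sqrt 5 / 3)))
    \<and> (\<forall>a b :: real. (a \<noteq> 0 \<or> b \<noteq> 0) \<longrightarrow>
      (\<lambda>m. let n = Suc m in real ((2*n) choose n) * Odd_harm n * gib a b (int n + t) / 12 ^ n)
      sums (sqrt 3 * sqrt (phi + 2) / 10 *
        ((a * (phi powi (t-1) - psi powi t) + b * (phi powi t - psi powi (t+1))) * ln phi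
         - (a * (phi powi (t-1) + psi powi t) + b * (phi powi t + psi powi (t+1))) * ln (sqrt 5 / 3))))"
  using lucz_central_binomial_Odd_harm_sums fibz_central_binomial_Odd_harm_sums
    gib_central_binomial_Odd_harm_sums
  by blast

end
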